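(* Let $E\subseteq\mathbb{R}$ and let $f:E\to\mathbb{R}$ be Abel continuous on $E$. Then $f$ is statistically continuous on $E$.
   Context: A sequence $(p_n)$ of real numbers is Abel convergent to $\ell$ if $\sum_{k=0}^{\infty}p_k x^k$ converges for every $0\le x<1$ and $\lim_{x\to 1^-}(1-x)\sum_{k=0}^{\infty}p_k x^k=\ell$. $f$ is Abel continuous on $E$ if for every sequence $(p_n)$ in $E$ Abel convergent to some $\ell\in E$, $(f(p_n))$ is Abel convergent to $f(\ell)$. A sequence $(p_k)$ is statistically convergent to $\ell$ if for every $\varepsilon>0$, $\lim_{n\to\infty}\frac1n|\{k\le n:|p_k-\ell|\ge\varepsilon\}|=0$. $f$ is statistically continuous on $E$ if for every sequence $(p_n)$ in $E$ statistically convergent to some $\ell\in E$, the sequence $(f(p_n))$ is statistically convergent to $f(\ell)$. *)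

theory Defs
  imports "HOL-Analysis.Analysis"
begin

definition abel_convergent :: "(nat \<Rightarrow> real) \<Rightarrow> real \<Rightarrow> bool" where
  "abel_convergent p l \<longleftrightarrow>
     (\<forall>x::real. 0 \<le> x \<and> x < 1 \<longrightarrow> summable (\<lambda>k. p k * x ^ k)) \<and>
     ((\<lambda>x. (1 - x) * (\<Sum>k. p k * x ^ k)) \<longlongrightarrow> l) (at_left 1)"

definition abel_continuous :: "real set \<Rightarrow> (real \<Rightarrow> real) \<Rightarrow> bool" where
  "abel_continuous E f \<longleftrightarrow>
     (\<forall>p l. (\<forall>n. p n \<in> E) \<and> l \<in> E \<and> abel_convergent p l
        \<longrightarrow> abel_convergent (\<lambda>n. f (p n)) (f l))"

definition stat_convergent :: "(nat \<Rightarrow> real) \<Rightarrow> real \<Rightarrow> bool" where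
  "stat_convergent p l \<longleftrightarrow>
     (\<forall>\<epsilon>>0. (\<lambda>n. real (card {k. k \<le> n \<and> \<bar>p k - l\<bar> \<ge> \<epsilon>}) / real n) \<longlonglongrightarrow> 0)"

definition stat_continuous :: "real set \<Rightarrow> (real \<Rightarrow> real) \<Rightarrow> bool" where
  "stat_continuous E f \<longleftrightarrow>
     (\<forall>p l. (\<forall>n. p n \<in> E) \<and> l \<in> E \<and> stat_convergent p l
        \<longrightarrow> stat_convergent (\<lambda>n. f (p n)) (f l))"

end

theory Submission
  imports Defs
begin

text \<open>
  Abel summation is regular: a sequence converging to \<open>l\<close> is Abel convergent to \<open>l\<close>
  (the finitely many terms far from \<open>l\<close> carry Abel weight \<open>O(1 - x)\<close>), and Abel
  limits respect lower bounds. Hence an Abel continuous \<open>f\<close> is continuous on \<open>E\<close>: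
  if \<open>f (u n) \<ge> f a + \<epsilon>\<close> along a subsequence of some \<open>u \<longlonglongrightarrow> a\<close>, that subsequence
  is Abel convergent to \<open>a\<close>, yet the Abel means of its image stay above \<open>f a + \<epsilon>\<close>.
  Continuity in turn yields for each \<open>\<epsilon>\<close> a \<open>\<delta>\<close> with
  \<open>{k. \<bar>f (p k) - f l\<bar> \<ge> \<epsilon>} \<subseteq> {k. \<bar>p k - l\<bar> \<ge> \<delta>}\<close>, so density-zero
  exceptional sets stay of density zero.
\<close>

lemma eventually_at_left_1_in_unit_interval:
  "eventually (\<lambda>x. x \<in> {0<..<1}) (at_left (1::real))"
  by (rule eventually_at_left_real) simp

lemma summable_abs_bounded_times_power:
  fixes d :: "nat \<Rightarrow> real"
  assumes "\<And>k. \<bar>d k\<bar> \<le> B" and "0 \<le> x" "x < 1"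
  shows "summable (\<lambda>k. \<bar>d k * x ^ k\<bar>)"
proof (rule summable_rabs_comparison_test)
  show "summable (\<lambda>k. B * x ^ k)"
    using assms by (intro summable_mult summable_geometric) simp
  show "\<exists>N. \<forall>k\<ge>N. \<bar>d k * x ^ k\<bar> \<le> B * x ^ k"
    using assms by (auto simp: abs_mult intro!: mult_right_mono)
qed

lemma abel_mean_abs_le:
  fixes d :: "nat \<Rightarrow> real" and B e x :: real and N :: nat
  assumes bound: "\<And>k. \<bar>d k\<bar> \<le> B" and tail: "\<And>k. k \<ge> N \<Longrightarrow> \<bar>d k\<bar> \<le> e"
    and x: "0 \<le> x" "x < 1"
  shows "(1 - x) * \<bar>\<Sum>k. d k * x ^ k\<bar> \<le> (1 - x) * (N * B) + e"
proof -
  have "0 \<le> e"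
    using tail[of N] by linarith
  have head_sums: "(\<lambda>k. if k < N then B else 0) sums (N * B)"
    using sums_finite[of "{..<N}" "\<lambda>k. if k < N then B else 0"] by simp
  have tail_sums: "(\<lambda>k. e * x ^ k) sums (e * (1 / (1 - x)))"
    using x by (intro sums_mult geometric_sums) simp
  have termwise: "\<bar>d k * x ^ k\<bar> \<le> (if k < N then B else 0) + e * x ^ k" for k
  proof (cases "k < N")
    case True
    have "\<bar>d k\<bar> * x ^ k \<le> B * 1"
      using x bound[of k] by (intro mult_mono power_le_one) auto
    moreover have "0 \<le> e * x ^ k"
      using \<open>0 \<le> e\<close> x by simp
    ultimately show ?thesis
      using True x by (simp add: abs_mult)
  next
    case False
    then show ?thesis
      using x tail[of k] by (simp add: abs_mult mult_right_mono)
  qed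
  have summable: "summable (\<lambda>k. \<bar>d k * x ^ k\<bar>)"
    using bound x by (rule summable_abs_bounded_times_power)
  have "\<bar>\<Sum>k. d k * x ^ k\<bar> \<le> (\<Sum>k. \<bar>d k * x ^ k\<bar>)"
    using summable by (rule summable_rabs)
  also have "\<dots> \<le> N * B + e * (1 / (1 - x))"
    using termwise by (intro sums_le[OF _ summable_sums[OF summable] sums_add[OF head_sums tail_sums]])
  finally show ?thesis
    using x by (auto simp: field_simps mult_left_mono)
qed

lemma abel_convergent_null:
  fixes d :: "nat \<Rightarrow> real"
  assumes "d \<longlonglongrightarrow> 0"
  shows "abel_convergent d 0"
proof -
  obtain B where B: "\<And>k. \<bar>d k\<bar> \<le> B"
    using BseqE[OF convergent_imp_Bseq[OF convergentI[OF assms]]] by (metis real_norm_def)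
  have "((\<lambda>x. (1 - x) * (\<Sum>k. d k * x ^ k)) \<longlongrightarrow> 0) (at_left 1)"
  proof (rule tendstoI)
    fix \<epsilon> :: real assume "\<epsilon> > 0"
    then obtain N where N: "\<And>k. k \<ge> N \<Longrightarrow> \<bar>d k\<bar> \<le> \<epsilon> / 2"
      using LIMSEQ_D[OF assms, of "\<epsilon> / 2"] by (metis half_gt_zero less_imp_le real_norm_def diff_0_right)
    have "((\<lambda>x. (1 - x) * (N * B)) \<longlongrightarrow> (1 - 1) * (N * B)) (at_left (1::real))"
      by (intro tendsto_intros)
    then have "eventually (\<lambda>x. (1 - x) * (N * B) < \<epsilon> / 2) (at_left (1::real))"
      using \<open>\<epsilon> > 0\<close> by (intro order_tendstoD) auto
    moreover note eventually_at_left_1_in_unit_interval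
    ultimately show "eventually (\<lambda>x. dist ((1 - x) * (\<Sum>k. d k * x ^ k)) 0 < \<epsilon>) (at_left 1)"
    proof eventually_elim
      case (elim x)
      have "(1 - x) * \<bar>\<Sum>k. d k * x ^ k\<bar> \<le> (1 - x) * (N * B) + \<epsilon> / 2"
        using elim by (intro abel_mean_abs_le[where N = N] B N) auto
      with elim have "(1 - x) * \<bar>\<Sum>k. d k * x ^ k\<bar> < \<epsilon>"
        by simp
      then show ?case
        using elim by (simp add: abs_mult)
    qed
  qed
  moreover have "summable (\<lambda>k. d k * x ^ k)" if "0 \<le> x" "x < 1" for x :: real
    using summable_rabs_cancel[OF summable_abs_bounded_times_power[OF B that]] .
  ultimately show ?thesis
    by (simp add: abel_convergent_def)
qed

lemma abel_convergent_add_const: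
  assumes "abel_convergent p L"
  shows "abel_convergent (\<lambda>k. p k + c) (L + c)"
proof -
  have sums: "(\<lambda>k. (p k + c) * x ^ k) sums ((\<Sum>k. p k * x ^ k) + c * (1 / (1 - x)))"
    if "0 \<le> x" "x < 1" for x :: real
  proof -
    have "(\<lambda>k. p k * x ^ k + c * x ^ k) sums ((\<Sum>k. p k * x ^ k) + c * (1 / (1 - x)))"
      using assms that unfolding abel_convergent_def
      by (intro sums_add summable_sums sums_mult geometric_sums) auto
    then show ?thesis by (simp add: distrib_right)
  qed
  from eventually_at_left_1_in_unit_interval
  have "eventually (\<lambda>x. (1 - x) * (\<Sum>k. p k * x ^ k) + c
      = (1 - x) * (\<Sum>k. (p k + c) * x ^ k)) (at_left (1::real))"
  proof eventually_elim
    case (elim x)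
    then have "(\<Sum>k. (p k + c) * x ^ k) = (\<Sum>k. p k * x ^ k) + c * (1 / (1 - x))"
      using sums by (intro sums_unique [symmetric]) auto
    then show ?case
      using elim by (simp add: field_simps)
  qed
  moreover have "((\<lambda>x. (1 - x) * (\<Sum>k. p k * x ^ k) + c) \<longlongrightarrow> L + c) (at_left 1)"
    using assms unfolding abel_convergent_def by (intro tendsto_add) auto
  ultimately have "((\<lambda>x. (1 - x) * (\<Sum>k. (p k + c) * x ^ k)) \<longlongrightarrow> L + c) (at_left 1)"
    by (rule Lim_transform_eventually[rotated])
  with sums show ?thesis
    unfolding abel_convergent_def by (blast intro: sums_summable)
qed

lemma abel_convergent_if_LIMSEQ:
  fixes q :: "nat \<Rightarrow> real"
  assumes "q \<longlonglongrightarrow> l"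
  shows "abel_convergent q l"
proof -
  have "(\<lambda>k. q k - l) \<longlonglongrightarrow> 0"
    using tendsto_diff[OF assms tendsto_const[of l]] by simp
  from abel_convergent_add_const[OF abel_convergent_null[OF this], of l] show ?thesis
    by simp
qed

lemma abel_convergent_minus:
  assumes "abel_convergent p L"
  shows "abel_convergent (\<lambda>k. - p k) (- L)"
proof -
  from eventually_at_left_1_in_unit_interval
  have "eventually (\<lambda>x. - ((1 - x) * (\<Sum>k. p k * x ^ k))
      = (1 - x) * (\<Sum>k. - p k * x ^ k)) (at_left (1::real))"
    by eventually_elim (use assms in \<open>auto simp: abel_convergent_def suminf_minus\<close>)
  moreover have "((\<lambda>x. - ((1 - x) * (\<Sum>k. p k * x ^ k))) \<longlongrightarrow> - L) (at_left 1)"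
    using assms unfolding abel_convergent_def by (intro tendsto_minus) auto
  ultimately show ?thesis
    using assms unfolding abel_convergent_def
    by (auto intro: summable_minus Lim_transform_eventually)
qed

lemma abel_convergent_lower_bound:
  assumes "abel_convergent p L" and "\<And>k. c \<le> p k"
  shows "c \<le> L"
proof (rule tendsto_lowerbound)
  show "((\<lambda>x. (1 - x) * (\<Sum>k. p k * x ^ k)) \<longlongrightarrow> L) (at_left 1)"
    using assms(1) unfolding abel_convergent_def by blast
  from eventually_at_left_1_in_unit_interval
  show "eventually (\<lambda>x. c \<le> (1 - x) * (\<Sum>k. p k * x ^ k)) (at_left 1)"
  proof eventually_elim
    case (elim x)
    have "c * (1 / (1 - x)) \<le> (\<Sum>k. p k * x ^ k)"
      using assms elim unfolding abel_convergent_def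
      by (intro sums_le[OF _ sums_mult[OF geometric_sums] summable_sums])
        (auto intro: mult_right_mono)
    then show ?case
      using elim by (simp add: field_simps)
  qed
qed simp

lemma abel_continuous_minus:
  assumes "abel_continuous E f"
  shows "abel_continuous E (\<lambda>x. - f x)"
  using assms abel_convergent_minus unfolding abel_continuous_def by blast

lemma abel_continuous_eventually_less:
  assumes f: "abel_continuous E f" and u: "\<And>n. u n \<in> E" "u \<longlonglongrightarrow> a" and "a \<in> E" "\<epsilon> > 0"
  shows "eventually (\<lambda>n. f (u n) < f a + \<epsilon>) sequentially"
proof (rule ccontr)
  assume "\<not> ?thesis"
  then obtain r :: "nat \<Rightarrow> nat" where r: "strict_mono r" and "\<forall>n. \<not> f (u (r n)) < f a + \<epsilon>"
    using not_eventually_sequentiallyD by blast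
  then have above: "\<And>n. f a + \<epsilon> \<le> f (u (r n))"
    by (simp add: not_less)
  have "abel_convergent (u \<circ> r) a"
    by (rule abel_convergent_if_LIMSEQ[OF LIMSEQ_subseq_LIMSEQ[OF u(2) r]])
  moreover have "\<forall>n. (u \<circ> r) n \<in> E"
    using u(1) by simp
  ultimately have "abel_convergent (\<lambda>n. f ((u \<circ> r) n)) (f a)"
    using f \<open>a \<in> E\<close> unfolding abel_continuous_def by blast
  then have "f a + \<epsilon> \<le> f a"
    by (rule abel_convergent_lower_bound) (simp add: above)
  with \<open>\<epsilon> > 0\<close> show False by simp
qed

lemma abel_continuous_imp_continuous_on:
  assumes "abel_continuous E f"
  shows "continuous_on E f"
proof (rule continuous_on_sequentiallyI)
  fix u a assume u: "\<forall>n. u n \<in> E" "a \<in> E" "u \<longlonglongrightarrow> a"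
  show "(\<lambda>n. f (u n)) \<longlonglongrightarrow> f a"
  proof (rule order_tendstoI)
    fix b assume "f a < b"
    then show "eventually (\<lambda>n. f (u n) < b) sequentially"
      using abel_continuous_eventually_less[OF assms, of u a "b - f a"] u by simp
  next
    fix b assume "b < f a"
    then show "eventually (\<lambda>n. b < f (u n)) sequentially"
      using abel_continuous_eventually_less[OF abel_continuous_minus[OF assms], of u a "f a - b"] u
      by simp
  qed
qed

lemma stat_convergent_continuous_on_compose:
  assumes f: "continuous_on E f" and p: "\<And>n. p n \<in> E" and "l \<in> E" "stat_convergent p l"
  shows "stat_convergent (\<lambda>n. f (p n)) (f l)"
  unfolding stat_convergent_def
proof (intro allI impI)
  fix \<epsilon> :: real assume "\<epsilon> > 0"
  then obtain \<delta> where "\<delta> > 0" and \<delta>: "\<And>y. y \<in> E \<Longrightarrow> \<bar>y - l\<bar> < \<delta> \<Longrightarrow> \<bar>f y - f l\<bar> < \<epsilon>"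
    using f \<open>l \<in> E\<close> unfolding continuous_on_iff dist_real_def by blast
  have "(\<lambda>n. real (card {k. k \<le> n \<and> \<bar>p k - l\<bar> \<ge> \<delta>}) / real n) \<longlonglongrightarrow> 0"
    using assms(4) \<open>\<delta> > 0\<close> unfolding stat_convergent_def by blast
  then show "(\<lambda>n. real (card {k. k \<le> n \<and> \<bar>f (p k) - f l\<bar> \<ge> \<epsilon>}) / real n) \<longlonglongrightarrow> 0"
  proof (rule Lim_null_comparison[rotated], intro always_eventually allI)
    fix n
    have "{k. k \<le> n \<and> \<bar>f (p k) - f l\<bar> \<ge> \<epsilon>} \<subseteq> {k. k \<le> n \<and> \<bar>p k - l\<bar> \<ge> \<delta>}"
      using \<delta> p by (force simp: not_le[symmetric])
    then have "card {k. k \<le> n \<and> \<bar>f (p k) - f l\<bar> \<ge> \<epsilon>} \<le> card {k. k \<le> n \<and> \<bar>p k - l\<bar> \<ge> \<delta>}"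
      by (rule card_mono[rotated]) simp
    then show "norm (real (card {k. k \<le> n \<and> \<bar>f (p k) - f l\<bar> \<ge> \<epsilon>}) / real n)
        \<le> real (card {k. k \<le> n \<and> \<bar>p k - l\<bar> \<ge> \<delta>}) / real n"
      by (simp add: divide_right_mono)
  qed
qed

theorem corollary2:
  fixes E :: "real set" and f :: "real \<Rightarrow> real"
  assumes "abel_continuous E f"
  shows "stat_continuous E f"
  using stat_convergent_continuous_on_compose[OF abel_continuous_imp_continuous_on[OF assms]]
  unfolding stat_continuous_def by blast

end
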